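(* Let $D$ be a connected C-homogeneous digraph and let $m,n\ge 1$ be integers such that for all $x\in VD$ the subdigraph induced by $N^+(x)$ is isomorphic to $\bar K_n[C_3]$ and the subdigraph induced by $N^-(x)$ is isomorphic to $\bar K_m[C_3]$. Then $m=n=1$.
   Context: A digraph has an irreflexive, antisymmetric edge relation; connectedness refers to the underlying undirected graph. $D$ is C-homogeneous if every isomorphism between finite connected induced subdigraphs extends to an automorphism of $D$. $N^+(x)=\{y: xy\in ED\}$, $N^-(x)=\{y: yx\in ED\}$. $C_3$ is the directed triangle, $\bar K_n$ the digraph on $n$ vertices without edges, and $D[D']$ the lexicographic product: vertex set $VD\times VD'$, edge $(x,y)(x',y')$ iff $xx'\in ED$ or ($x=x'$ and $yy'\in ED'$). Thus $\bar K_n[C_3]$ is the disjoint union of $n$ directed triangles. *)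

theory Defs
  imports Main
begin

definition digraph :: "'a set \<Rightarrow> ('a \<Rightarrow> 'a \<Rightarrow> bool) \<Rightarrow> bool" where
  "digraph V E \<longleftrightarrow> (\<forall>x y. E x y \<longrightarrow> x \<in> V \<and> y \<in> V) \<and> (\<forall>x. \<not> E x x)
      \<and> (\<forall>x y. E x y \<longrightarrow> \<not> E y x)"

definition induced :: "('a \<Rightarrow> 'a \<Rightarrow> bool) \<Rightarrow> 'a set \<Rightarrow> 'a \<Rightarrow> 'a \<Rightarrow> bool" where
  "induced E S = (\<lambda>x y. x \<in> S \<and> y \<in> S \<and> E x y)"

definition dg_iso :: "('a \<Rightarrow> 'b) \<Rightarrow> 'a set \<Rightarrow> ('a \<Rightarrow> 'a \<Rightarrow> bool) \<Rightarrow> 'b set \<Rightarrow> ('b \<Rightarrow> 'b \<Rightarrow> bool) \<Rightarrow> bool" where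
  "dg_iso f V1 E1 V2 E2 \<longleftrightarrow> bij_betw f V1 V2 \<and> (\<forall>x\<in>V1. \<forall>y\<in>V1. E1 x y \<longleftrightarrow> E2 (f x) (f y))"

definition dg_isomorphic :: "'a set \<Rightarrow> ('a \<Rightarrow> 'a \<Rightarrow> bool) \<Rightarrow> 'b set \<Rightarrow> ('b \<Rightarrow> 'b \<Rightarrow> bool) \<Rightarrow> bool" where
  "dg_isomorphic V1 E1 V2 E2 \<longleftrightarrow> (\<exists>f. dg_iso f V1 E1 V2 E2)"

definition dg_connected :: "'a set \<Rightarrow> ('a \<Rightarrow> 'a \<Rightarrow> bool) \<Rightarrow> bool" where
  "dg_connected V E \<longleftrightarrow> V \<noteq> {} \<and>
     (\<forall>x\<in>V. \<forall>y\<in>V. (\<lambda>u v. u \<in> V \<and> v \<in> V \<and> (E u v \<or> E v u))\<^sup>*\<^sup>* x y)"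

definition out_nbhd :: "('a \<Rightarrow> 'a \<Rightarrow> bool) \<Rightarrow> 'a \<Rightarrow> 'a set" where
  "out_nbhd E x = {y. E x y}"

definition in_nbhd :: "('a \<Rightarrow> 'a \<Rightarrow> bool) \<Rightarrow> 'a \<Rightarrow> 'a set" where
  "in_nbhd E x = {y. E y x}"

definition c_homogeneous :: "'a set \<Rightarrow> ('a \<Rightarrow> 'a \<Rightarrow> bool) \<Rightarrow> bool" where
  "c_homogeneous V E \<longleftrightarrow>
    (\<forall>A B f. A \<subseteq> V \<and> B \<subseteq> V \<and> finite A \<and> finite B
       \<and> dg_connected A (induced E A) \<and> dg_connected B (induced E B)
       \<and> dg_iso f A (induced E A) B (induced E B)
       \<longrightarrow> (\<exists>g. dg_iso g V E V E \<and> (\<forall>x\<in>A. g x = f x)))"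

definition lex_verts :: "'a set \<Rightarrow> 'b set \<Rightarrow> ('a \<times> 'b) set" where
  "lex_verts V V' = V \<times> V'"

definition lex_edges :: "('a \<Rightarrow> 'a \<Rightarrow> bool) \<Rightarrow> ('b \<Rightarrow> 'b \<Rightarrow> bool) \<Rightarrow> ('a \<times> 'b) \<Rightarrow> ('a \<times> 'b) \<Rightarrow> bool" where
  "lex_edges E E' = (\<lambda>(x,y) (x',y'). E x x' \<or> (x = x' \<and> E' y y'))"

definition C3_verts :: "nat set" where "C3_verts = {0,1,2}"
definition C3_edges :: "nat \<Rightarrow> nat \<Rightarrow> bool" where
  "C3_edges = (\<lambda>a b. a \<in> C3_verts \<and> b \<in> C3_verts \<and> b = (a + 1) mod 3)"

definition Kbar_verts :: "nat \<Rightarrow> nat set" where "Kbar_verts n = {0..<n}"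
definition Kbar_edges :: "nat \<Rightarrow> nat \<Rightarrow> bool" where "Kbar_edges = (\<lambda>_ _. False)"

end

theory Submission
  imports Defs
begin

text \<open>
Only the local structure of the neighbourhoods matters: each of them is a disjoint union of
directed triangles. Take an edge \<open>x \<rightarrow> y\<close> and let \<open>z\<close> be the successor of \<open>y\<close> inside the
triangle of \<open>N\<^sup>+(x)\<close> through \<open>y\<close>. By C-homogeneity every directed triangle is isomorphic to
one in \<open>N\<^sup>-(x)\<close>, so the triangle of \<open>N\<^sup>+(x)\<close> through \<open>y\<close> has a common out-neighbour \<open>b\<close>,
which turns out to be non-adjacent to \<open>x\<close>. If \<open>N\<^sup>+(y)\<close> contained a vertex \<open>q\<close> outside the
triangle of \<open>z\<close>, then \<open>q \<rightarrow> x\<close>: otherwise the induced paths \<open>x y q\<close> and \<open>x y b\<close> would be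
isomorphic, and an automorphism fixing \<open>x, y\<close> (hence \<open>z\<close>) and moving \<open>q\<close> to \<open>b\<close> would force
\<open>z \<rightarrow> q\<close>. So a whole triangle \<open>p \<rightarrow> p' \<rightarrow> p''\<close> of \<open>N\<^sup>+(y)\<close> would lie in \<open>N\<^sup>-(x)\<close>. Then the
successors \<open>s\<close> of \<open>x\<close> in \<open>N\<^sup>+(p)\<close> and \<open>s'\<close> of \<open>x\<close> in \<open>N\<^sup>+(p')\<close> are both predecessors of \<open>y\<close> in
\<open>N\<^sup>+(x)\<close>, hence equal, although \<open>s \<rightarrow> p' \<rightarrow> s'\<close>. Hence \<open>|N\<^sup>+(y)| = 3\<close>, i.e. \<open>n = 1\<close>;
reversing all edges gives \<open>m = 1\<close>.
\<close>

text \<open>For a loopless \<open>E\<close>: \<open>A\<close> induces a disjoint union of directed triangles.\<close>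
definition disjoint_triangles :: "'a set \<Rightarrow> ('a \<Rightarrow> 'a \<Rightarrow> bool) \<Rightarrow> bool" where
  "disjoint_triangles A E \<longleftrightarrow> (\<forall>a\<in>A. \<exists>c\<in>A. E a c) \<and> (\<forall>a\<in>A. \<exists>c\<in>A. E c a)
     \<and> (\<forall>a\<in>A. \<forall>c\<in>A. \<forall>d\<in>A. E a c \<longrightarrow> E a d \<longrightarrow> c = d)
     \<and> (\<forall>a\<in>A. \<forall>c\<in>A. \<forall>d\<in>A. E c a \<longrightarrow> E d a \<longrightarrow> c = d)
     \<and> (\<forall>a\<in>A. \<forall>c\<in>A. \<forall>d\<in>A. E a c \<longrightarrow> E c d \<longrightarrow> E d a)"

lemma disjoint_triangles_converse: "disjoint_triangles A E \<Longrightarrow> disjoint_triangles A (\<lambda>a b. E b a)"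
  unfolding disjoint_triangles_def by blast

lemma dg_iso_disjoint_triangles:
  assumes iso: "dg_iso f A (induced E A) B F" and tri: "disjoint_triangles B F"
  shows "disjoint_triangles A E"
proof -
  have inj: "inj_on f A" and im: "f ` A = B"
    using iso unfolding dg_iso_def bij_betw_def by auto
  have edge: "E a c \<longleftrightarrow> F (f a) (f c)" if "a \<in> A" "c \<in> A" for a c
    using iso that unfolding dg_iso_def induced_def by auto
  have "\<forall>a\<in>A. \<exists>c\<in>A. E a c"
  proof
    fix a assume "a \<in> A"
    with tri im obtain c where "c \<in> A" "F (f a) (f c)" unfolding disjoint_triangles_def by blast
    with edge \<open>a \<in> A\<close> show "\<exists>c\<in>A. E a c" by blast
  qed
  moreover have "\<forall>a\<in>A. \<exists>c\<in>A. E c a"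
  proof
    fix a assume "a \<in> A"
    with tri im obtain c where "c \<in> A" "F (f c) (f a)" unfolding disjoint_triangles_def by blast
    with edge \<open>a \<in> A\<close> show "\<exists>c\<in>A. E c a" by blast
  qed
  moreover have "\<forall>a\<in>A. \<forall>c\<in>A. \<forall>d\<in>A. E a c \<longrightarrow> E a d \<longrightarrow> c = d"
    using tri im inj edge unfolding disjoint_triangles_def inj_on_def by (smt (verit) imageI)
  moreover have "\<forall>a\<in>A. \<forall>c\<in>A. \<forall>d\<in>A. E c a \<longrightarrow> E d a \<longrightarrow> c = d"
    using tri im inj edge unfolding disjoint_triangles_def inj_on_def by (smt (verit) imageI)
  moreover have "\<forall>a\<in>A. \<forall>c\<in>A. \<forall>d\<in>A. E a c \<longrightarrow> E c d \<longrightarrow> E d a"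
    using tri im edge unfolding disjoint_triangles_def by (smt (verit) imageI)
  ultimately show ?thesis unfolding disjoint_triangles_def by blast
qed

lemma dg_isomorphic_disjoint_triangles:
  "dg_isomorphic A (induced E A) B F \<Longrightarrow> disjoint_triangles B F \<Longrightarrow> disjoint_triangles A E"
  unfolding dg_isomorphic_def using dg_iso_disjoint_triangles by blast

lemma dg_isomorphic_card: "dg_isomorphic A R B S \<Longrightarrow> card A = card B"
  unfolding dg_isomorphic_def dg_iso_def using bij_betw_same_card by blast

lemma card_Kbar_C3: "card (lex_verts (Kbar_verts k) C3_verts) = 3 * k"
  by (simp add: lex_verts_def Kbar_verts_def C3_verts_def card_cartesian_product)

lemma disjoint_triangles_Kbar_C3:
  "disjoint_triangles (lex_verts (Kbar_verts k) C3_verts) (lex_edges Kbar_edges C3_edges)"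
proof -
  have vert: "p \<in> lex_verts (Kbar_verts k) C3_verts \<longleftrightarrow> fst p < k \<and> snd p < 3" for p
    by (cases p) (auto simp: lex_verts_def Kbar_verts_def C3_verts_def)
  have edge: "lex_edges Kbar_edges C3_edges p q
      \<longleftrightarrow> fst p = fst q \<and> snd p < 3 \<and> snd q = (snd p + 1) mod 3" for p q
    by (cases p; cases q) (auto simp: lex_edges_def Kbar_edges_def C3_edges_def C3_verts_def)
  have succ: "snd p < 3 \<Longrightarrow> lex_edges Kbar_edges C3_edges p (fst p, (snd p + 1) mod 3)"
    and pred: "snd p < 3 \<Longrightarrow> lex_edges Kbar_edges C3_edges (fst p, (snd p + 2) mod 3) p" for p
    unfolding edge by (simp; presburger)+
  show ?thesis
    unfolding disjoint_triangles_def
  proof (intro conjI ballI impI)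
    show "\<exists>q\<in>lex_verts (Kbar_verts k) C3_verts. lex_edges Kbar_edges C3_edges p q"
      if "p \<in> lex_verts (Kbar_verts k) C3_verts" for p
      using that succ[of p] by (intro bexI[of _ "(fst p, (snd p + 1) mod 3)"]) (auto simp: vert)
    show "\<exists>q\<in>lex_verts (Kbar_verts k) C3_verts. lex_edges Kbar_edges C3_edges q p"
      if "p \<in> lex_verts (Kbar_verts k) C3_verts" for p
      using that pred[of p] by (intro bexI[of _ "(fst p, (snd p + 2) mod 3)"]) (auto simp: vert)
  qed (auto simp: vert edge prod_eq_iff mod_Suc split: if_splits)
qed

lemma dg_isomorphic_Kbar_C3:
  assumes "dg_isomorphic A (induced E A) (lex_verts (Kbar_verts k) C3_verts) (lex_edges Kbar_edges C3_edges)"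
  shows "disjoint_triangles A E" and "card A = 3 * k"
  using dg_isomorphic_disjoint_triangles[OF assms disjoint_triangles_Kbar_C3]
    dg_isomorphic_card[OF assms] card_Kbar_C3 by simp_all

lemma induced_converse: "induced (\<lambda>a b. E b a) A = (\<lambda>a b. induced E A b a)"
  unfolding induced_def by (intro ext) blast

lemma dg_connected_converse: "dg_connected A (\<lambda>a b. R b a) = dg_connected A R"
proof -
  have "(\<lambda>u v. u \<in> A \<and> v \<in> A \<and> (R v u \<or> R u v)) = (\<lambda>u v. u \<in> A \<and> v \<in> A \<and> (R u v \<or> R v u))"
    by (intro ext) blast
  then show ?thesis unfolding dg_connected_def by simp
qed

lemma dg_iso_converse: "dg_iso f A (\<lambda>a b. R b a) B (\<lambda>a b. S b a) = dg_iso f A R B S"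
  unfolding dg_iso_def by auto

lemma c_homogeneousD:
  assumes "c_homogeneous V E" "A \<subseteq> V" "B \<subseteq> V" "finite A" "finite B"
    "dg_connected A (induced E A)" "dg_connected B (induced E B)"
    "dg_iso f A (induced E A) B (induced E B)"
  obtains g where "dg_iso g V E V E" "\<forall>x\<in>A. g x = f x"
proof -
  have "\<exists>g. dg_iso g V E V E \<and> (\<forall>x\<in>A. g x = f x)"
    by (rule assms(1)[unfolded c_homogeneous_def, rule_format, of A B f]) (intro conjI assms(2-))
  with that show ?thesis by blast
qed

lemma c_homogeneous_converse:
  assumes hom: "c_homogeneous V E"
  shows "c_homogeneous V (\<lambda>a b. E b a)"
  unfolding c_homogeneous_def induced_converse[of E]
proof (intro allI impI, elim conjE)
  fix A B f
  assume sub: "A \<subseteq> V" "B \<subseteq> V" "finite A" "finite B"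
    and conn: "dg_connected A (\<lambda>a b. induced E A b a)" "dg_connected B (\<lambda>a b. induced E B b a)"
    and iso: "dg_iso f A (\<lambda>a b. induced E A b a) B (\<lambda>a b. induced E B b a)"
  have "dg_connected A (induced E A)" "dg_connected B (induced E B)"
    using conn dg_connected_converse[of A "induced E A"] dg_connected_converse[of B "induced E B"]
    by simp_all
  moreover have "dg_iso f A (induced E A) B (induced E B)"
    using iso dg_iso_converse[of f A "induced E A" B "induced E B"] by simp
  ultimately obtain g where "dg_iso g V E V E" "\<forall>x\<in>A. g x = f x"
    using c_homogeneousD[OF hom sub] by blast
  then show "\<exists>g. dg_iso g V (\<lambda>a b. E b a) V (\<lambda>a b. E b a) \<and> (\<forall>x\<in>A. g x = f x)"
    using dg_iso_converse[of g V E V E] by blast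
qed

lemma dg_connected_induced_three:
  assumes "E a b \<or> E b a" "E b c \<or> E c b"
  shows "dg_connected {a, b, c} (induced E {a, b, c})"
proof -
  let ?R = "\<lambda>u v. u \<in> {a, b, c} \<and> v \<in> {a, b, c}
     \<and> (induced E {a, b, c} u v \<or> induced E {a, b, c} v u)"
  have ab: "?R\<^sup>*\<^sup>* a b" "?R\<^sup>*\<^sup>* b a" and bc: "?R\<^sup>*\<^sup>* b c" "?R\<^sup>*\<^sup>* c b"
    using assms unfolding induced_def by (simp_all add: r_into_rtranclp disj_commute)
  moreover have "?R\<^sup>*\<^sup>* a c" "?R\<^sup>*\<^sup>* c a"
    using rtranclp_trans[OF ab(1) bc(1)] rtranclp_trans[OF bc(2) ab(2)] .
  ultimately show ?thesis
    unfolding dg_connected_def by (simp only: ball_simps insert_not_empty simp_thms rtranclp.rtrancl_refl)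
qed

lemma dg_iso_induced_three:
  assumes "a1 \<noteq> a2" "a1 \<noteq> a3" "a2 \<noteq> a3" "b1 \<noteq> b2" "b1 \<noteq> b3" "b2 \<noteq> b3"
    and "f a1 = b1" "f a2 = b2" "f a3 = b3"
    and "E a1 a2 = E b1 b2" "E a2 a1 = E b2 b1" "E a1 a3 = E b1 b3" "E a3 a1 = E b3 b1"
      "E a2 a3 = E b2 b3" "E a3 a2 = E b3 b2"
    and "E a1 a1 = E b1 b1" "E a2 a2 = E b2 b2" "E a3 a3 = E b3 b3"
  shows "dg_iso f {a1, a2, a3} (induced E {a1, a2, a3}) {b1, b2, b3} (induced E {b1, b2, b3})"
proof -
  have "f ` {a1, a2, a3} = {b1, b2, b3}" and "inj_on f {a1, a2, a3}"
    using assms unfolding inj_on_def by auto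
  moreover have "induced E {a1, a2, a3} x y = induced E {b1, b2, b3} (f x) (f y)"
    if "x \<in> {a1, a2, a3}" "y \<in> {a1, a2, a3}" for x y
    using that unfolding induced_def by (elim insertE emptyE) (simp_all add: assms)
  ultimately show ?thesis unfolding dg_iso_def bij_betw_def by blast
qed

locale c_homogeneous_triangle_nbhds =
  fixes V :: "'a set" and E :: "'a \<Rightarrow> 'a \<Rightarrow> bool"
  assumes digraph: "digraph V E"
    and c_homogeneous: "c_homogeneous V E"
    and out_nbhd_triangles: "\<And>u. u \<in> V \<Longrightarrow> disjoint_triangles (out_nbhd E u) E"
    and in_nbhd_triangles: "\<And>u. u \<in> V \<Longrightarrow> disjoint_triangles (in_nbhd E u) E"
begin

lemma converse: "c_homogeneous_triangle_nbhds V (\<lambda>a b. E b a)"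
proof
  show "digraph V (\<lambda>a b. E b a)" using digraph unfolding digraph_def by blast
  show "c_homogeneous V (\<lambda>a b. E b a)" using c_homogeneous_converse[OF c_homogeneous] .
  have "out_nbhd (\<lambda>a b. E b a) u = in_nbhd E u"
    and "in_nbhd (\<lambda>a b. E b a) u = out_nbhd E u" for u
    unfolding out_nbhd_def in_nbhd_def by simp_all
  then show "disjoint_triangles (out_nbhd (\<lambda>a b. E b a) u) (\<lambda>a b. E b a)"
    and "disjoint_triangles (in_nbhd (\<lambda>a b. E b a) u) (\<lambda>a b. E b a)" if "u \<in> V" for u
    using disjoint_triangles_converse in_nbhd_triangles[OF that] out_nbhd_triangles[OF that]
    by simp_all
qed

lemma edge_in_V: "E a b \<Longrightarrow> a \<in> V" "E a b \<Longrightarrow> b \<in> V"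
  using digraph unfolding digraph_def by blast+

lemma irrefl: "\<not> E a a"
  using digraph unfolding digraph_def by blast

lemma asym: "E a b \<Longrightarrow> \<not> E b a"
  using digraph unfolding digraph_def by blast

lemma out_nbhd_disjoint_triangles: "E u a \<Longrightarrow> disjoint_triangles (out_nbhd E u) E"
  using out_nbhd_triangles edge_in_V(1) by blast

lemma in_nbhd_disjoint_triangles: "E a u \<Longrightarrow> disjoint_triangles (in_nbhd E u) E"
  using in_nbhd_triangles edge_in_V(2) by blast

lemma out_nbhd_succ: "E u a \<Longrightarrow> \<exists>c. E u c \<and> E a c"
  using out_nbhd_disjoint_triangles[of u a]
  unfolding disjoint_triangles_def out_nbhd_def mem_Collect_eq by blast

lemma out_nbhd_succ_unique: "E u a \<Longrightarrow> E u c \<Longrightarrow> E u d \<Longrightarrow> E a c \<Longrightarrow> E a d \<Longrightarrow> c = d"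
  using out_nbhd_disjoint_triangles[of u a]
  unfolding disjoint_triangles_def out_nbhd_def mem_Collect_eq by blast

lemma out_nbhd_pred_unique: "E u a \<Longrightarrow> E u c \<Longrightarrow> E u d \<Longrightarrow> E c a \<Longrightarrow> E d a \<Longrightarrow> c = d"
  using out_nbhd_disjoint_triangles[of u a]
  unfolding disjoint_triangles_def out_nbhd_def mem_Collect_eq by blast

lemma out_nbhd_closed: "E u a \<Longrightarrow> E u c \<Longrightarrow> E u d \<Longrightarrow> E a c \<Longrightarrow> E c d \<Longrightarrow> E d a"
  using out_nbhd_disjoint_triangles[of u a]
  unfolding disjoint_triangles_def out_nbhd_def mem_Collect_eq by blast

lemma in_nbhd_succ: "E a u \<Longrightarrow> \<exists>c. E c u \<and> E a c"
  using in_nbhd_disjoint_triangles[of a u]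
  unfolding disjoint_triangles_def in_nbhd_def mem_Collect_eq by blast

lemma in_nbhd_succ_unique: "E a u \<Longrightarrow> E c u \<Longrightarrow> E d u \<Longrightarrow> E a c \<Longrightarrow> E a d \<Longrightarrow> c = d"
  using in_nbhd_disjoint_triangles[of a u]
  unfolding disjoint_triangles_def in_nbhd_def mem_Collect_eq by blast

lemma in_nbhd_closed: "E a u \<Longrightarrow> E c u \<Longrightarrow> E d u \<Longrightarrow> E a c \<Longrightarrow> E c d \<Longrightarrow> E d a"
  using in_nbhd_disjoint_triangles[of a u]
  unfolding disjoint_triangles_def in_nbhd_def mem_Collect_eq by blast

lemma automorphism_dg_iso: "dg_iso g V E V E \<Longrightarrow> a \<in> V \<Longrightarrow> c \<in> V \<Longrightarrow> E (g a) (g c) = E a c"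
  unfolding dg_iso_def by blast

lemma automorphism_extending_three:
  assumes distinct: "a1 \<noteq> a2" "a1 \<noteq> a3" "a2 \<noteq> a3" "b1 \<noteq> b2" "b1 \<noteq> b3" "b2 \<noteq> b3"
    and adj: "E a1 a2 \<or> E a2 a1" "E a2 a3 \<or> E a3 a2"
    and edges: "E a1 a2 = E b1 b2" "E a2 a1 = E b2 b1" "E a1 a3 = E b1 b3" "E a3 a1 = E b3 b1"
      "E a2 a3 = E b2 b3" "E a3 a2 = E b3 b2"
  obtains g where "dg_iso g V E V E" "g a1 = b1" "g a2 = b2" "g a3 = b3"
proof -
  let ?f = "\<lambda>v. if v = a1 then b1 else if v = a2 then b2 else b3"
  have iso: "dg_iso ?f {a1, a2, a3} (induced E {a1, a2, a3}) {b1, b2, b3} (induced E {b1, b2, b3})"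
    by (rule dg_iso_induced_three) (simp_all add: distinct distinct[symmetric] edges irrefl)
  have adj': "E b1 b2 \<or> E b2 b1" "E b2 b3 \<or> E b3 b2"
    using adj edges by simp_all
  have conn: "dg_connected {a1, a2, a3} (induced E {a1, a2, a3})"
    "dg_connected {b1, b2, b3} (induced E {b1, b2, b3})"
    using adj adj' by (simp_all only: dg_connected_induced_three)
  have sub: "{a1, a2, a3} \<subseteq> V" "{b1, b2, b3} \<subseteq> V"
    using adj adj' edge_in_V by blast+
  have fin: "finite {a1, a2, a3}" "finite {b1, b2, b3}"
    by simp_all
  obtain g where "dg_iso g V E V E" "\<forall>v\<in>{a1, a2, a3}. g v = ?f v"
    by (rule c_homogeneousD[OF c_homogeneous sub fin conn iso])
  with distinct that show ?thesis by simp
qed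

text \<open>Every directed triangle is mapped by an automorphism onto a triangle of \<open>N\<^sup>-(x)\<close>;
  the preimage of \<open>x\<close> is then a common out-neighbour.\<close>
lemma triangle_common_out_nbr:
  assumes yz: "E y z" and zw: "E z w" and wy: "E w y" and sx: "E s x"
  obtains b where "E y b" "E z b" "E w b"
proof -
  obtain s' where s'x: "E s' x" and ss': "E s s'" using in_nbhd_succ[OF sx] by blast
  obtain s'' where s''x: "E s'' x" and s's'': "E s' s''" using in_nbhd_succ[OF s'x] by blast
  have s''s: "E s'' s" using in_nbhd_closed[OF sx s'x s''x ss' s's''] .
  obtain g where g: "dg_iso g V E V E" and gy: "g y = s" and gz: "g z = s'" and gw: "g w = s''"
    by (rule automorphism_extending_three[of y z w s s' s''])
      (use yz zw wy ss' s's'' s''s irrefl asym in metis)+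
  have "x \<in> g ` V" using g edge_in_V(2)[OF sx] unfolding dg_iso_def bij_betw_def by blast
  then obtain b where bV: "b \<in> V" and gb: "g b = x" by blast
  have "E y b" "E z b" "E w b"
    using automorphism_dg_iso[OF g _ bV] edge_in_V gy gz gw gb sx s'x s''x yz zw wy by metis+
  with that show ?thesis .
qed

text \<open>If \<open>b \<rightarrow> x\<close>, the predecessor \<open>t\<close> of \<open>z\<close> in \<open>N\<^sup>+(y)\<close> and the predecessor \<open>t'\<close> of \<open>w\<close> in
  \<open>N\<^sup>+(z)\<close> are both successors of \<open>b\<close> in \<open>N\<^sup>-(x)\<close>, so \<open>t = t'\<close> has the two successors \<open>z, w\<close>
  in \<open>N\<^sup>+(x)\<close>.\<close>
lemma common_out_nbr_not_into:
  assumes xy: "E x y" and xz: "E x z" and xw: "E x w"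
    and yz: "E y z" and zw: "E z w"
    and yb: "E y b" and zb: "E z b" and wb: "E w b"
  shows "\<not> E b x"
proof
  assume bx: "E b x"
  obtain t where tz: "E t z" and yt: "E y t" using in_nbhd_succ[OF yz] by blast
  have tx: "E t x" using in_nbhd_closed[OF xz yz tz xy yt] .
  obtain t2 where yt2: "E y t2" and bt2: "E b t2" using out_nbhd_succ[OF yb] by blast
  have "E t2 z" using out_nbhd_closed[OF yz yb yt2 zb bt2] .
  then have bt: "E b t" using out_nbhd_pred_unique[OF yz yt yt2 tz] bt2 by simp
  obtain t' where t'w: "E t' w" and zt': "E z t'" using in_nbhd_succ[OF zw] by blast
  have t'x: "E t' x" using in_nbhd_closed[OF xw zw t'w xz zt'] .
  obtain t3 where zt3: "E z t3" and bt3: "E b t3" using out_nbhd_succ[OF zb] by blast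
  have "E t3 w" using out_nbhd_closed[OF zw zb zt3 wb bt3] .
  then have bt': "E b t'" using out_nbhd_pred_unique[OF zw zt' zt3 t'w] bt3 by simp
  have "t = t'" using in_nbhd_succ_unique[OF bx tx t'x bt bt'] .
  then have "z = w" using out_nbhd_succ_unique[OF tx tz _ xz xw] t'w by simp
  with zw irrefl show False by simp
qed

text \<open>The induced paths \<open>x y q\<close> and \<open>x y b\<close> are isomorphic; an automorphism realising this
  fixes \<open>z\<close>, the unique common out-neighbour of \<open>x\<close> and \<open>y\<close>.\<close>
lemma out_nbr_into_unless_adjacent:
  assumes xy: "E x y" and xz: "E x z" and yz: "E y z"
    and yb: "E y b" and zb: "E z b" and xb: "\<not> E x b" and bx: "\<not> E b x"
    and yq: "E y q" and qz: "q \<noteq> z" and zq: "\<not> E z q"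
  shows "E q x"
proof (rule ccontr)
  assume qx: "\<not> E q x"
  have xq: "\<not> E x q" using out_nbhd_succ_unique[OF xy _ xz yq yz] qz by blast
  obtain g where g: "dg_iso g V E V E" and gx: "g x = x" and gy: "g y = y" and gq: "g q = b"
    by (rule automorphism_extending_three[of x y q x y b])
      (use xy yq yb xq qx xb bx irrefl asym in metis)+
  have zV: "z \<in> V" using edge_in_V(2)[OF xz] .
  have "E x (g z)" "E y (g z)"
    using automorphism_dg_iso[OF g _ zV] edge_in_V xy xz yz gx gy by metis+
  then have "g z = z" using out_nbhd_succ_unique[OF xy _ xz _ yz] by blast
  then have "E z q = E z b"
    using automorphism_dg_iso[OF g zV edge_in_V(2)[OF yq]] gq by simp
  with zq zb show False by simp
qed

lemma out_triangle_not_into: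
  assumes xy: "E x y" and yp: "E y p" and yp': "E y p'" and yp'': "E y p''"
    and pp': "E p p'" and p'p'': "E p' p''"
    and px: "E p x" and p'x: "E p' x" and p''x: "E p'' x"
  shows False
proof -
  have between: "\<exists>s. E x s \<and> E s y \<and> E s v' \<and> E v s"
    if vx: "E v x" and v'x: "E v' x" and vv': "E v v'" and yv: "E y v" and yv': "E y v'" for v v'
  proof -
    obtain s where vs: "E v s" and xs: "E x s" using out_nbhd_succ[OF vx] by blast
    have sv': "E s v'" using out_nbhd_closed[OF vv' vx vs v'x xs] .
    have "E s y" using in_nbhd_closed[OF yv' vv' sv' yv vs] .
    with xs sv' vs show ?thesis by blast
  qed
  obtain s where "E x s" "E s y" "E s p'" using between[OF px p'x pp' yp yp'] by blast
  moreover obtain s' where "E x s'" "E s' y" "E p' s'" using between[OF p'x p''x p'p'' yp' yp''] by blast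
  ultimately have "E s p'" "E p' s" using out_nbhd_pred_unique[OF xy] by metis+
  with asym show False by blast
qed

lemma not_adjacent_succ:
  assumes yz: "E y z" and yq: "E y q" and yq': "E y q'" and qq': "E q q'"
    and "q \<noteq> z" "\<not> E z q" "\<not> E q z"
  shows "q' \<noteq> z \<and> \<not> E z q' \<and> \<not> E q' z"
  using assms out_nbhd_pred_unique[OF yq' yz yq] out_nbhd_closed[OF yq yq' yz qq'] by blast

lemma out_nbr_adjacent:
  assumes xy: "E x y" and xz: "E x z" and yz: "E y z" and sx: "E s x" and yq: "E y q"
  shows "q = z \<or> E z q \<or> E q z"
proof (rule ccontr)
  assume far: "\<not> (q = z \<or> E z q \<or> E q z)"
  obtain w where xw: "E x w" and zw: "E z w" using out_nbhd_succ[OF xz] by blast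
  have wy: "E w y" using out_nbhd_closed[OF xy xz xw yz zw] .
  obtain b where yb: "E y b" and zb: "E z b" and wb: "E w b"
    using triangle_common_out_nbr[OF yz zw wy sx] .
  have xb: "\<not> E x b" using out_nbhd_succ_unique[OF xy xz _ yz yb] zb irrefl by blast
  have bx: "\<not> E b x" using common_out_nbr_not_into[OF xy xz xw yz zw yb zb wb] .
  obtain q' where yq': "E y q'" and qq': "E q q'" using out_nbhd_succ[OF yq] by blast
  obtain q'' where yq'': "E y q''" and q'q'': "E q' q''" using out_nbhd_succ[OF yq'] by blast
  have far': "q' \<noteq> z \<and> \<not> E z q' \<and> \<not> E q' z"
    using not_adjacent_succ[OF yz yq yq' qq'] far by blast
  have far'': "q'' \<noteq> z \<and> \<not> E z q'' \<and> \<not> E q'' z"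
    using not_adjacent_succ[OF yz yq' yq'' q'q''] far' by blast
  have "E q x" "E q' x" "E q'' x"
    using out_nbr_into_unless_adjacent[OF xy xz yz yb zb xb bx] yq yq' yq'' far far' far''
    by blast+
  then show False using out_triangle_not_into[OF xy yq yq' yq'' qq' q'q''] by blast
qed

lemma card_out_nbhd_le_3:
  assumes xy: "E x y" and sx: "E s x"
  shows "card (out_nbhd E y) \<le> 3"
proof -
  obtain z where xz: "E x z" and yz: "E y z" using out_nbhd_succ[OF xy] by blast
  obtain z' where yz': "E y z'" and zz': "E z z'" using out_nbhd_succ[OF yz] by blast
  obtain z'' where yz'': "E y z''" and z'z'': "E z' z''" using out_nbhd_succ[OF yz'] by blast
  have z''z: "E z'' z" using out_nbhd_closed[OF yz yz' yz'' zz' z'z''] .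
  have "out_nbhd E y \<subseteq> {z, z', z''}"
  proof
    fix q assume "q \<in> out_nbhd E y"
    then have yq: "E y q" unfolding out_nbhd_def by simp
    then have "q = z \<or> E z q \<or> E q z" using out_nbr_adjacent[OF xy xz yz sx] by blast
    then show "q \<in> {z, z', z''}"
      using out_nbhd_succ_unique[OF yz yq yz'] out_nbhd_pred_unique[OF yz yq yz''] zz' z''z
      by blast
  qed
  then have "card (out_nbhd E y) \<le> card {z, z', z''}" by (simp add: card_mono)
  also have "\<dots> \<le> 3" by (simp add: card_insert_if)
  finally show ?thesis .
qed

end

theorem lemma3p8:
  fixes V :: "'a set" and E :: "'a \<Rightarrow> 'a \<Rightarrow> bool" and m n :: nat
  assumes "digraph V E"
    and "dg_connected V E"
    and "c_homogeneous V E"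
    and "m \<ge> 1" and "n \<ge> 1"
    and "\<forall>x\<in>V. dg_isomorphic (out_nbhd E x) (induced E (out_nbhd E x))
                 (lex_verts (Kbar_verts n) C3_verts) (lex_edges Kbar_edges C3_edges)"
    and "\<forall>x\<in>V. dg_isomorphic (in_nbhd E x) (induced E (in_nbhd E x))
                 (lex_verts (Kbar_verts m) C3_verts) (lex_edges Kbar_edges C3_edges)"
  shows "m = 1 \<and> n = 1"
proof -
  have card_out: "\<forall>u\<in>V. card (out_nbhd E u) = 3 * n"
    and card_in: "\<forall>u\<in>V. card (in_nbhd E u) = 3 * m"
    using assms(6,7) dg_isomorphic_Kbar_C3(2) by blast+
  interpret D: c_homogeneous_triangle_nbhds V E
    using assms(1,3,6,7) dg_isomorphic_Kbar_C3(1) by unfold_locales blast+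
  interpret D': c_homogeneous_triangle_nbhds V "\<lambda>a b. E b a"
    by (rule D.converse)
  obtain x where x: "x \<in> V" using assms(2) unfolding dg_connected_def by blast
  have "0 < card (out_nbhd E x)" "0 < card (in_nbhd E x)"
    using x card_out card_in assms(4,5) by simp_all
  then obtain y s where xy: "E x y" and sx: "E s x"
    unfolding card_gt_0_iff out_nbhd_def in_nbhd_def by blast
  have "card (out_nbhd E y) \<le> 3" using D.card_out_nbhd_le_3[OF xy sx] .
  moreover have "card (in_nbhd E s) \<le> 3"
    using D'.card_out_nbhd_le_3[OF sx xy] unfolding out_nbhd_def in_nbhd_def .
  ultimately show ?thesis
    using card_out card_in D.edge_in_V[OF xy] D.edge_in_V[OF sx] assms(4,5) by simp
qed

end
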